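(* Let $n,k$ be integers with $n\geq k+1\geq 2$. Then $E_n(as_k)=\frac{4(n-k)+5}{6}$ holds if and only if $E_n(zs_k)=\frac{2(n-k)+4}{3}$ holds.
   Context: $\mathfrak{S}_n$ is the set of permutations $w=w_1\cdots w_n$ of $\{1,\dots,n\}$. A subsequence $w_{i_1}\cdots w_{i_s}$ ($i_1<\dots<i_s$) is alternating if $w_{i_1}>w_{i_2}<w_{i_3}>\cdots$, reverse alternating if $w_{i_1}<w_{i_2}>w_{i_3}<\cdots$, and zigzagging if it is alternating or reverse alternating. It is $k$-alternating (resp. $k$-zigzagging) if it is alternating (resp. zigzagging) and $|w_{i_j}-w_{i_{j+1}}|\geq k$ for all $j$. $as_k(w)$ (resp. $zs_k(w)$) is the maximal length of a $k$-alternating (resp. $k$-zigzagging) subsequence of $w$. $E_n(as_k)=\frac1{n!}\sum_{w\in\mathfrak{S}_n}as_k(w)$ and $E_n(zs_k)=\frac1{n!}\sum_{w\in\mathfrak{S}_n}zs_k(w)$. *)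

theory Defs
  imports Complex_Main "HOL-Library.Sublist"
begin

definition perms :: "nat \<Rightarrow> nat list set" where
  "perms n = {w. distinct w \<and> set w = {1..n}}"

definition alternating :: "nat list \<Rightarrow> bool" where
  "alternating s \<longleftrightarrow> (\<forall>j. j + 1 < length s \<longrightarrow>
     (if even j then s ! j > s ! (j+1) else s ! j < s ! (j+1)))"

definition rev_alternating :: "nat list \<Rightarrow> bool" where
  "rev_alternating s \<longleftrightarrow> (\<forall>j. j + 1 < length s \<longrightarrow>
     (if even j then s ! j < s ! (j+1) else s ! j > s ! (j+1)))"

definition zigzagging :: "nat list \<Rightarrow> bool" where
  "zigzagging s \<longleftrightarrow> alternating s \<or> rev_alternating s"

definition gaps_ge :: "nat \<Rightarrow> nat list \<Rightarrow> bool" where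
  "gaps_ge k s \<longleftrightarrow> (\<forall>j. j + 1 < length s \<longrightarrow> \<bar>int (s ! j) - int (s ! (j+1))\<bar> \<ge> int k)"

definition k_alternating :: "nat \<Rightarrow> nat list \<Rightarrow> bool" where
  "k_alternating k s \<longleftrightarrow> alternating s \<and> gaps_ge k s"

definition k_zigzagging :: "nat \<Rightarrow> nat list \<Rightarrow> bool" where
  "k_zigzagging k s \<longleftrightarrow> zigzagging s \<and> gaps_ge k s"

definition as_k :: "nat \<Rightarrow> nat list \<Rightarrow> nat" where
  "as_k k w = Max {length s | s. subseq s w \<and> k_alternating k s}"

definition zs_k :: "nat \<Rightarrow> nat list \<Rightarrow> nat" where
  "zs_k k w = Max {length s | s. subseq s w \<and> k_zigzagging k s}"

definition E_as :: "nat \<Rightarrow> nat \<Rightarrow> real" where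
  "E_as n k = (\<Sum>w\<in>perms n. real (as_k k w)) / fact n"

definition E_zs :: "nat \<Rightarrow> nat \<Rightarrow> real" where
  "E_zs n k = (\<Sum>w\<in>perms n. real (zs_k k w)) / fact n"

end

theory Submission
  imports Defs "HOL-Combinatorics.Multiset_Permutations"
begin

text \<open>
  Unless all entries of a word w are pairwise closer than k, there is a first entry b that differs
  by at least k from an earlier entry a. If this first jump goes up, every k-alternating
  subsequence s_1 s_2 s_3 ... of w yields the longer reverse k-alternating subsequence
  a x s_2 s_3 ..., with x either s_1 or b. Since dropping the first entry switches between the
  two kinds, the longest reverse k-alternating subsequence is then exactly one longer than the
  longest k-alternating one; a downward first jump reduces to this case via the complement
  x \<mapsto> c - x, which exchanges the two kinds. Hence on permutations of {1..n} with n > k,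
  zs_k is the mean of the two longest lengths plus 1/2, and since the complement
  x \<mapsto> n + 1 - x permutes these permutations, E_n(zs_k) = E_n(as_k) + 1/2.
\<close>

definition longest_subseq :: "('a list \<Rightarrow> bool) \<Rightarrow> 'a list \<Rightarrow> nat" where
  "longest_subseq P w = Max {length s | s. subseq s w \<and> P s}"

lemma finite_subseq_lengths: "finite {length s | s. subseq s w \<and> P s}"
  by (rule finite_subset[of _ "{..length w}"]) (auto dest: list_emb_length)

lemma longest_subseq_ge: "subseq s w \<Longrightarrow> P s \<Longrightarrow> length s \<le> longest_subseq P w"
  unfolding longest_subseq_def by (rule Max_ge[OF finite_subseq_lengths]) blast

lemma longest_subseq_witness:
  assumes "P []"
  obtains s where "subseq s w" "P s" "length s = longest_subseq P w"
proof -
  have "length [] \<in> {length s | s. subseq s w \<and> P s}"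
    using assms by auto
  then have "{length s | s. subseq s w \<and> P s} \<noteq> {}"
    by blast
  then obtain s where "Max {length s | s. subseq s w \<and> P s} = length s" "subseq s w" "P s"
    using Max_in[OF finite_subseq_lengths] by blast
  then show ?thesis
    using that unfolding longest_subseq_def by simp
qed

lemma longest_subseq_cong:
  assumes "\<And>s. subseq s w \<Longrightarrow> P s \<longleftrightarrow> Q s"
  shows "longest_subseq P w = longest_subseq Q w"
proof -
  have "{length s | s. subseq s w \<and> P s} = {length s | s. subseq s w \<and> Q s}"
    using assms by blast
  then show ?thesis
    unfolding longest_subseq_def by simp
qed

lemma longest_subseq_disj:
  assumes "P []" "Q []"
  shows "longest_subseq (\<lambda>s. P s \<or> Q s) w = max (longest_subseq P w) (longest_subseq Q w)"
proof -
  have union: "{length s | s. subseq s w \<and> (P s \<or> Q s)} =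
        {length s | s. subseq s w \<and> P s} \<union> {length s | s. subseq s w \<and> Q s}"
    by blast
  have "length [] \<in> {length s | s. subseq s w \<and> P s}" "length [] \<in> {length s | s. subseq s w \<and> Q s}"
    using assms by auto
  then have "{length s | s. subseq s w \<and> P s} \<noteq> {}" "{length s | s. subseq s w \<and> Q s} \<noteq> {}"
    by blast+
  then show ?thesis
    unfolding longest_subseq_def union by (simp add: Max_Un finite_subseq_lengths)
qed

lemma longest_subseq_tl_le:
  assumes "P []" "\<And>a s. P (a # s) \<Longrightarrow> Q s"
  shows "longest_subseq P w \<le> longest_subseq Q w + 1"
proof -
  obtain s where s: "subseq s w" "P s" "length s = longest_subseq P w"
    using longest_subseq_witness[where P = P, OF assms(1)] .
  have "subseq (tl s) w"
    using s(1) by (cases s) (auto dest: subseq_Cons')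
  moreover have "Q (tl s)" if "s \<noteq> []"
    using that s(2) assms(2) by (cases s) auto
  ultimately show ?thesis
    using s longest_subseq_ge[of "tl s" w Q] by (cases s) auto
qed

lemma longest_subseq_map_involution:
  assumes "\<forall>x\<in>set w. f (f x) = x"
  shows "longest_subseq P (map f w) = longest_subseq (\<lambda>s. P (map f s)) w"
proof -
  have "{length t | t. subseq t (map f w) \<and> P t} = {length s | s. subseq s w \<and> P (map f s)}"
  proof safe
    fix t assume t: "subseq t (map f w)" "P t"
    have "map f (map f w) = w"
      using assms by (simp add: map_idI)
    then have "subseq (map f t) w"
      using subseq_map[OF t(1), of f] by simp
    moreover have "f (f x) = x" if x: "x \<in> set t" for x
    proof -
      obtain y where "y \<in> set w" "x = f y"
        using list_emb_set[OF t(1) x] by auto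
      then show ?thesis
        using assms by simp
    qed
    then have "map f (map f t) = t"
      by (simp add: map_idI)
    ultimately show "\<exists>s. length t = length s \<and> subseq s w \<and> P (map f s)"
      using t(2) by (intro exI[of _ "map f t"]) simp
  next
    fix s assume "subseq s w" "P (map f s)"
    then show "\<exists>t. length s = length t \<and> subseq t (map f w) \<and> P t"
      by (intro exI[of _ "map f s"]) (simp add: subseq_map)
  qed
  then show ?thesis
    unfolding longest_subseq_def by simp
qed

lemma all_adjacent_Cons:
  "(\<forall>j. j + 1 < length (a # s) \<longrightarrow> Q j) \<longleftrightarrow> (s \<noteq> [] \<longrightarrow> Q 0) \<and> (\<forall>j. j + 1 < length s \<longrightarrow> Q (Suc j))"
  by (cases s) (auto simp: All_less_Suc2)

lemma alternating_Cons_Cons [simp]: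
  "alternating (a # b # s) \<longleftrightarrow> b < a \<and> rev_alternating (b # s)"
  unfolding alternating_def rev_alternating_def all_adjacent_Cons[of a] by auto

lemma rev_alternating_Cons_Cons [simp]:
  "rev_alternating (a # b # s) \<longleftrightarrow> a < b \<and> alternating (b # s)"
  unfolding alternating_def rev_alternating_def all_adjacent_Cons[of a] by auto

lemma gaps_ge_Cons_Cons [simp]:
  "gaps_ge k (a # b # s) \<longleftrightarrow> int k \<le> \<bar>int a - int b\<bar> \<and> gaps_ge k (b # s)"
  unfolding gaps_ge_def all_adjacent_Cons[of a] by auto

lemma alternating_length_le_1 [simp]:
  "alternating []" "alternating [a]" "rev_alternating []" "rev_alternating [a]"
  "gaps_ge k []" "gaps_ge k [a]"
  by (simp_all add: alternating_def rev_alternating_def gaps_ge_def)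

definition k_rev_alternating :: "nat \<Rightarrow> nat list \<Rightarrow> bool" where
  "k_rev_alternating k s \<longleftrightarrow> rev_alternating s \<and> gaps_ge k s"

lemma k_alternating_Cons_Cons:
  "k_alternating k (a # b # s) \<longleftrightarrow> b < a \<and> b + k \<le> a \<and> k_rev_alternating k (b # s)"
  by (auto simp: k_alternating_def k_rev_alternating_def)

lemma k_rev_alternating_Cons_Cons:
  "k_rev_alternating k (a # b # s) \<longleftrightarrow> a < b \<and> a + k \<le> b \<and> k_alternating k (b # s)"
  by (auto simp: k_alternating_def k_rev_alternating_def)

lemma k_alternating_ConsD: "k_alternating k (a # s) \<Longrightarrow> k_rev_alternating k s"
  by (cases s) (auto simp: k_alternating_Cons_Cons k_rev_alternating_def)

lemma k_rev_alternating_ConsD: "k_rev_alternating k (a # s) \<Longrightarrow> k_alternating k s"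
  by (cases s) (auto simp: k_rev_alternating_Cons_Cons k_alternating_def)

lemma alternating_map_diff:
  assumes "\<forall>x\<in>set s. x \<le> c"
  shows "alternating (map ((-) c) s) \<longleftrightarrow> rev_alternating s"
    and "rev_alternating (map ((-) c) s) \<longleftrightarrow> alternating s"
    and "gaps_ge k (map ((-) c) s) \<longleftrightarrow> gaps_ge k s"
proof -
  have le: "s ! j \<le> c" "s ! Suc j \<le> c" if "Suc j < length s" for j
    using assms that by simp_all
  have flip: "c - x < c - y \<longleftrightarrow> y < x" if "x \<le> c" "y \<le> c" for x y
    using that by linarith
  show "alternating (map ((-) c) s) \<longleftrightarrow> rev_alternating s"
    unfolding alternating_def rev_alternating_def by (simp add: flip le)
  show "rev_alternating (map ((-) c) s) \<longleftrightarrow> alternating s"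
    unfolding alternating_def rev_alternating_def by (simp add: flip le)
  show "gaps_ge k (map ((-) c) s) \<longleftrightarrow> gaps_ge k s"
    unfolding gaps_ge_def by (simp add: le of_nat_diff abs_minus_commute)
qed

lemma k_alternating_map_diff:
  assumes "\<forall>x\<in>set s. x \<le> c"
  shows "k_alternating k (map ((-) c) s) \<longleftrightarrow> k_rev_alternating k s"
    and "k_rev_alternating k (map ((-) c) s) \<longleftrightarrow> k_alternating k s"
  using alternating_map_diff[OF assms]
  by (simp_all add: k_alternating_def k_rev_alternating_def)

lemma longest_alternating_map_diff:
  assumes "\<forall>x\<in>set w. x \<le> c"
  shows "longest_subseq (k_alternating k) (map ((-) c) w) = longest_subseq (k_rev_alternating k) w"
    and "longest_subseq (k_rev_alternating k) (map ((-) c) w) = longest_subseq (k_alternating k) w"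
proof -
  have involution: "\<forall>x\<in>set w. c - (c - x) = x"
    using assms by simp
  have bounded: "\<forall>x\<in>set s. x \<le> c" if "subseq s w" for s
    using assms list_emb_set[OF that] by fastforce
  show "longest_subseq (k_alternating k) (map ((-) c) w) = longest_subseq (k_rev_alternating k) w"
    unfolding longest_subseq_map_involution[OF involution]
    by (rule longest_subseq_cong) (simp add: k_alternating_map_diff bounded)
  show "longest_subseq (k_rev_alternating k) (map ((-) c) w) = longest_subseq (k_alternating k) w"
    unfolding longest_subseq_map_involution[OF involution]
    by (rule longest_subseq_cong) (simp add: k_alternating_map_diff bounded)
qed

definition narrow :: "nat \<Rightarrow> nat list \<Rightarrow> bool" where
  "narrow k P \<longleftrightarrow> (\<forall>x\<in>set P. \<forall>y\<in>set P. x < y + k)"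

definition first_jump_up :: "nat \<Rightarrow> nat list \<Rightarrow> bool" where
  "first_jump_up k w \<longleftrightarrow> (\<exists>P a b z. w = P @ b # z \<and> narrow k P \<and> a \<in> set P \<and> a + k \<le> b)"

definition first_jump_down :: "nat \<Rightarrow> nat list \<Rightarrow> bool" where
  "first_jump_down k w \<longleftrightarrow> (\<exists>P a b z. w = P @ b # z \<and> narrow k P \<and> a \<in> set P \<and> b + k \<le> a)"

lemma narrow_or_first_jump:
  assumes "0 < k"
  shows "narrow k w \<or> first_jump_up k w \<or> first_jump_down k w"
proof (induction w rule: rev_induct)
  case Nil
  then show ?case by (simp add: narrow_def)
next
  case (snoc b w)
  show ?case
  proof (cases "narrow k w")
    case True
    show ?thesis
    proof (cases "\<exists>a\<in>set w. a + k \<le> b \<or> b + k \<le> a")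
      case jump: True
      have "w @ [b] = w @ b # []"
        by simp
      with True jump show ?thesis
        unfolding first_jump_up_def first_jump_down_def by blast
    next
      case False
      with True assms have "narrow k (w @ [b])"
        unfolding narrow_def by force
      then show ?thesis by simp
    qed
  next
    case False
    with snoc.IH show ?thesis
      unfolding first_jump_up_def first_jump_down_def by fastforce
  qed
qed

lemma subseq_past_first_jump:
  assumes sub: "subseq (s1 # s2 # r) (P @ b # z)" and P: "narrow k P" "a \<in> set P"
    and up: "a + k \<le> b" and down: "s2 + k \<le> s1"
  shows "subseq (s2 # r) z \<and> (subseq (s1 # s2 # r) z \<or> s1 \<le> b)"
proof -
  obtain xs1 xs2 where split: "s1 # s2 # r = xs1 @ xs2"
    and in_P: "subseq xs1 P" and in_bz: "subseq xs2 (b # z)"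
    using sub by (rule subseq_appendE)
  show ?thesis
  proof (cases xs1)
    case Nil
    with split in_bz have "subseq (s1 # s2 # r) (b # z)"
      by simp
    then show ?thesis
      by (cases "s1 = b") (auto dest: subseq_Cons')
  next
    case (Cons y ys)
    with split have y: "y = s1" and rest: "s2 # r = ys @ xs2"
      by auto
    have s1_in_P: "s1 \<in> set P"
      using list_emb_set[OF in_P] Cons y by auto
    have "ys = []"
    proof (rule ccontr)
      assume "ys \<noteq> []"
      with rest have "s2 \<in> set ys"
        by (cases ys) auto
      then have "s2 \<in> set P"
        using list_emb_set[OF in_P] Cons by auto
      with s1_in_P P(1) down show False
        unfolding narrow_def by fastforce
    qed
    with rest in_bz have "subseq (s2 # r) (b # z)"
      by simp
    moreover have "s1 < b"
      using s1_in_P P up unfolding narrow_def by fastforce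
    ultimately show ?thesis
      using down by (auto dest: subseq_Cons2_neq)
  qed
qed

lemma first_jump_up_extends:
  assumes "first_jump_up k w" "0 < k" and s: "subseq s w" "k_alternating k s"
  obtains t where "subseq t w" "k_rev_alternating k t" "length t = length s + 1"
proof -
  obtain P a b z where w: "w = P @ b # z" and P: "narrow k P" "a \<in> set P" and up: "a + k \<le> b"
    using assms(1) unfolding first_jump_up_def by blast
  have prepend_a: "subseq (a # t) w" if "subseq t (b # z)" for t
    using list_emb_append_mono[OF _ that, of "[a]" P] P(2) w by (simp add: subseq_singleton_left)
  show ?thesis
  proof (cases s rule: remdups_adj.cases)
    case 1
    have "subseq [a] w"
      using prepend_a[of "[]"] by simp
    with 1 that show ?thesis
      by (simp add: k_rev_alternating_def)
  next
    case (2 s1)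
    have "subseq [a, b] w"
      using prepend_a[of "[b]"] by simp
    with 2 that up \<open>0 < k\<close> show ?thesis
      by (simp add: k_rev_alternating_Cons_Cons k_alternating_def)
  next
    case (3 s1 s2 r)
    with s have down: "s2 < s1" "s2 + k \<le> s1" and tail: "k_rev_alternating k (s2 # r)"
      by (simp_all add: k_alternating_Cons_Cons)
    have past: "subseq (s2 # r) z" "subseq (s1 # s2 # r) z \<or> s1 \<le> b"
      using subseq_past_first_jump[OF _ P up down(2)] s(1) 3 w by simp_all
    obtain x where "subseq (x # s2 # r) (b # z)" "a + k \<le> x" "s1 \<le> x"
    proof (cases "subseq (s1 # s2 # r) z \<and> a + k \<le> s1")
      case True
      then show ?thesis
        using that[of s1] past(1) by auto
    next
      case False
      with past(2) up have "s1 \<le> b"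
        by auto
      then show ?thesis
        using that[of b] past(1) up by simp
    qed
    then show ?thesis
      using that[of "a # x # s2 # r"] prepend_a down tail \<open>0 < k\<close> 3
      by (simp add: k_rev_alternating_Cons_Cons k_alternating_Cons_Cons)
  qed
qed

lemma longest_alternating_lt_of_first_jump_up:
  assumes "first_jump_up k w" "0 < k"
  shows "longest_subseq (k_alternating k) w < longest_subseq (k_rev_alternating k) w"
proof -
  obtain s where s: "subseq s w" "k_alternating k s" "length s = longest_subseq (k_alternating k) w"
    using longest_subseq_witness[where P = "k_alternating k"] by (auto simp: k_alternating_def)
  obtain t where "subseq t w" "k_rev_alternating k t" "length t = length s + 1"
    using first_jump_up_extends[OF assms s(1,2)] .
  with s(3) show ?thesis
    using longest_subseq_ge[of t w "k_rev_alternating k"] by simp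
qed

lemma first_jump_down_map_diff:
  assumes "first_jump_down k w" "\<forall>x\<in>set w. x \<le> c"
  shows "first_jump_up k (map ((-) c) w)"
proof -
  obtain P a b z where w: "w = P @ b # z" and P: "narrow k P" "a \<in> set P" and down: "b + k \<le> a"
    using assms(1) unfolding first_jump_down_def by blast
  have bounded: "\<forall>x\<in>set P. x \<le> c" "b \<le> c"
    using assms(2) w by auto
  have "narrow k (map ((-) c) P)"
    unfolding narrow_def
  proof (intro ballI)
    fix x y assume "x \<in> set (map ((-) c) P)" "y \<in> set (map ((-) c) P)"
    then obtain x' y' where xy: "x' \<in> set P" "y' \<in> set P" "x = c - x'" "y = c - y'"
      by auto
    with P(1) have "y' < x' + k"
      unfolding narrow_def by blast
    with xy bounded(1) show "x < y + k"
      by fastforce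
  qed
  moreover have "(c - a) + k \<le> c - b" "c - a \<in> set (map ((-) c) P)"
    using down bounded P(2) by fastforce+
  moreover have "map ((-) c) w = map ((-) c) P @ (c - b) # map ((-) c) z"
    using w by simp
  ultimately show ?thesis
    unfolding first_jump_up_def by blast
qed

lemma longest_rev_alternating_lt_of_first_jump_down:
  assumes "first_jump_down k w" "0 < k"
  shows "longest_subseq (k_rev_alternating k) w < longest_subseq (k_alternating k) w"
proof -
  define c where "c = Max (set w)"
  have bounded: "\<forall>x\<in>set w. x \<le> c"
    unfolding c_def by simp
  show ?thesis
    using longest_alternating_lt_of_first_jump_up[OF first_jump_down_map_diff[OF assms(1) bounded] assms(2)]
    unfolding longest_alternating_map_diff[OF bounded] .
qed

lemma as_k_eq_longest: "as_k k w = longest_subseq (k_alternating k) w"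
  unfolding as_k_def longest_subseq_def ..

lemma zs_k_eq_max: "zs_k k w = max (as_k k w) (longest_subseq (k_rev_alternating k) w)"
proof -
  have "zs_k k w = longest_subseq (\<lambda>s. k_alternating k s \<or> k_rev_alternating k s) w"
    unfolding zs_k_def longest_subseq_def k_zigzagging_def zigzagging_def
      k_alternating_def k_rev_alternating_def by meson
  also have "\<dots> = max (as_k k w) (longest_subseq (k_rev_alternating k) w)"
    unfolding as_k_eq_longest
    by (rule longest_subseq_disj) (simp_all add: k_alternating_def k_rev_alternating_def)
  finally show ?thesis .
qed

lemma double_zs_k:
  assumes "0 < k" "\<not> narrow k w"
  shows "2 * zs_k k w = as_k k w + longest_subseq (k_rev_alternating k) w + 1"
proof -
  have "as_k k w \<le> longest_subseq (k_rev_alternating k) w + 1"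
    unfolding as_k_eq_longest
    by (rule longest_subseq_tl_le) (simp_all add: k_alternating_def k_alternating_ConsD)
  moreover have "longest_subseq (k_rev_alternating k) w \<le> as_k k w + 1"
    unfolding as_k_eq_longest
    by (rule longest_subseq_tl_le) (simp_all add: k_rev_alternating_def k_rev_alternating_ConsD)
  moreover have "as_k k w \<noteq> longest_subseq (k_rev_alternating k) w"
    using narrow_or_first_jump[OF assms(1), of w] assms(2) unfolding as_k_eq_longest
    by (auto dest: longest_alternating_lt_of_first_jump_up[OF _ assms(1)]
        longest_rev_alternating_lt_of_first_jump_down[OF _ assms(1)])
  ultimately show ?thesis
    unfolding zs_k_eq_max by linarith
qed

lemma perms_eq_permutations_of_set: "perms n = permutations_of_set {1..n}"
  unfolding perms_def permutations_of_set_def by auto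

lemma not_narrow_perms:
  assumes "w \<in> perms n" "k < n"
  shows "\<not> narrow k w"
proof -
  have "1 \<in> set w" "n \<in> set w"
    using assms by (auto simp: perms_def)
  with assms(2) show ?thesis
    unfolding narrow_def by fastforce
qed

lemma complement_perms:
  assumes "w \<in> perms n"
  shows "map ((-) (n + 1)) w \<in> perms n" "map ((-) (n + 1)) (map ((-) (n + 1)) w) = w"
proof -
  have w: "set w = {1..n}" "distinct w"
    using assms by (auto simp: perms_def)
  have "inj_on ((-) (n + 1)) {1..n}"
    by (auto simp: inj_on_def)
  moreover have "(-) (n + 1) ` {1..n} = {1..n}"
  proof
    show "{1..n} \<subseteq> (-) (n + 1) ` {1..n}"
    proof
      fix y assume "y \<in> {1..n}"
      then show "y \<in> (-) (n + 1) ` {1..n}"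
        by (intro image_eqI[of _ _ "n + 1 - y"]) auto
    qed
  qed auto
  ultimately show "map ((-) (n + 1)) w \<in> perms n"
    using w by (simp add: perms_def distinct_map)
  show "map ((-) (n + 1)) (map ((-) (n + 1)) w) = w"
    using w(1) by (auto intro: map_idI)
qed

lemma sum_longest_rev_alternating_perms:
  "(\<Sum>w\<in>perms n. longest_subseq (k_rev_alternating k) w) = (\<Sum>w\<in>perms n. as_k k w)"
proof (rule sum.reindex_bij_witness[of _ "map ((-) (n + 1))" "map ((-) (n + 1))"])
  fix w assume w: "w \<in> perms n"
  then have "\<forall>x\<in>set w. x \<le> n + 1"
    by (auto simp: perms_def)
  then show "as_k k (map ((-) (n + 1)) w) = longest_subseq (k_rev_alternating k) w"
    by (simp add: longest_alternating_map_diff as_k_eq_longest)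
qed (use complement_perms in force)+

lemma E_zs_eq_E_as_plus_half:
  assumes "0 < k" "k < n"
  shows "E_zs n k = E_as n k + 1 / 2"
proof -
  have "2 * (\<Sum>w\<in>perms n. zs_k k w) = (\<Sum>w\<in>perms n. as_k k w + longest_subseq (k_rev_alternating k) w + 1)"
    unfolding sum_distrib_left using double_zs_k[OF assms(1) not_narrow_perms[OF _ assms(2)]]
    by (intro sum.cong) auto
  also have "\<dots> = 2 * (\<Sum>w\<in>perms n. as_k k w) + card (perms n)"
    unfolding sum.distrib sum_longest_rev_alternating_perms by simp
  also have "\<dots> = 2 * (\<Sum>w\<in>perms n. as_k k w) + fact n"
    by (simp add: perms_eq_permutations_of_set)
  finally have "2 * real (\<Sum>w\<in>perms n. zs_k k w) = 2 * real (\<Sum>w\<in>perms n. as_k k w) + fact n"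
    by (metis of_nat_add of_nat_mult of_nat_fact of_nat_numeral)
  then show ?thesis
    unfolding E_zs_def E_as_def by (simp add: field_simps)
qed

theorem lemma1p2:
  fixes n k :: nat
  assumes "1 \<le> k" and "k + 1 \<le> n"
  shows "E_as n k = (4 * (real n - real k) + 5) / 6 \<longleftrightarrow>
         E_zs n k = (2 * (real n - real k) + 4) / 3"
proof -
  have "E_zs n k = E_as n k + 1 / 2"
    using assms by (intro E_zs_eq_E_as_plus_half) auto
  then show ?thesis
    by (auto simp: field_simps)
qed

end
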